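(* Let $c_{\mathrm{TX}}>0$, $\phi>0$, $\theta=\phi/c_{\mathrm{TX}}$, $B\geq1$ an integer, $0<\lambda\leq\lambda_{\mathrm{th}}=\frac{1}{(1+\sqrt{\theta})^2}$, and $$v_{\mathrm{th}}(\lambda,0)=\sqrt{\lambda\theta}+\frac{\lambda}{2}+\sqrt{\lambda}\sqrt{\sqrt{\lambda\theta}+\frac{\lambda}{4}}.$$ For $V_k\in(0,1]$, let $(t^{(MP)}(V_k),S_M^{(MP)}(V_k))$ be the myopic policy in the zero-ambient-noise case, i.e. a (possibly randomized among minimizers) minimizer over $t\in\{0,1,\dots,B\}$, $S_M\geq 0$ of $$\frac{V_k}{1+V_ktS_M}+\lambda t(1+\theta S_M).$$ Then: (i) if $V_k>v_{\mathrm{th}}(\lambda,0)$, then $t^{(MP)}(V_k)=1$ and $S_M^{(MP)}(V_k)=\frac{1}{\sqrt{\lambda\theta}}-\frac{1}{V_k}$; (ii) if $V_k<v_{\mathrm{th}}(\lambda,0)$, then $t^{(MP)}(V_k)=S_M^{(MP)}(V_k)=0$; (iii) if $V_k=v_{\mathrm{th}}(\lambda,0)$, then $t^{(MP)}(V_k)=1$, $S_M^{(MP)}(V_k)=\frac{1}{\sqrt{\lambda\theta}}-\frac{1}{V_k}$ with probability $p_0$, and $t^{(MP)}(V_k)=0$, $S_M^{(MP)}(V_k)=0$ with probability $1-p_0$, for some $p_0\in[0,1]$.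
   Context: This is the coordinated scheme with infinite ambient SNR ($S_A=\infty$): activating $t$ sensors each with local measurement SNR $S_M$ yields aggregate SNR $tS_M$, and the posterior variance given prior variance $V_k$ is $V_k/(1+V_ktS_M)$. Each active sensor costs $c_{\mathrm{TX}}+\phi S_M$; $\lambda$ is a Lagrange multiplier. *)

theory Defs
  imports Complex_Main
begin

text \<open>Myopic objective (zero ambient noise): posterior variance plus lambda times
  the total sensing cost, with cost per active sensor c_TX + phi S_M, normalised by c_TX,
  so theta = phi / c_TX.\<close>
definition myopic_obj :: "real \<Rightarrow> real \<Rightarrow> real \<Rightarrow> nat \<Rightarrow> real \<Rightarrow> real" where
  "myopic_obj \<theta> lam V t S = V / (1 + V * real t * S) + lam * real t * (1 + \<theta> * S)"

text \<open>Set of all minimizers over t in {0..B}, S_M >= 0. A (possibly randomized)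
  myopic policy picks (according to some distribution) an element of this set.\<close>
definition myopic_minimizers :: "nat \<Rightarrow> real \<Rightarrow> real \<Rightarrow> real \<Rightarrow> (nat \<times> real) set" where
  "myopic_minimizers B \<theta> lam V =
     {(t, S). t \<le> B \<and> S \<ge> 0 \<and>
        (\<forall>t' S'. t' \<le> B \<longrightarrow> S' \<ge> 0 \<longrightarrow> myopic_obj \<theta> lam V t S \<le> myopic_obj \<theta> lam V t' S')}"

definition v_th :: "real \<Rightarrow> real \<Rightarrow> real" where
  "v_th \<theta> lam = sqrt (lam * \<theta>) + lam / 2 + sqrt lam * sqrt (sqrt (lam * \<theta>) + lam / 4)"

end

theory Submission
  imports Defs
begin

text \<open>Write \<open>s = sqrt (lam * \<theta>)\<close> and \<open>u = 1 + V t S\<close>. Completing the square gives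
  \<open>myopic_obj = (V - s u)\<^sup>2 / (u V) + lam t + 2 s - s\<^sup>2 / V\<close>, so among active policies
  (\<open>t \<ge> 1\<close>) the value \<open>lam + 2 s - s\<^sup>2 / V\<close> is attained exactly at \<open>t = 1\<close>, \<open>u = V / s\<close>,
  while every idle policy (\<open>t = 0\<close>) has value \<open>V\<close>. The difference of the two values is
  \<open>(V - v) (V - w) / V\<close>, where \<open>v = v_th \<theta> lam > s > w\<close> are the roots of
  \<open>V\<^sup>2 - (2 s + lam) V + s\<^sup>2\<close>; below \<open>s\<close> the optimal point \<open>u = V / s\<close> is infeasible and
  sensing never pays.\<close>

lemma myopic_obj_idle [simp]: "myopic_obj \<theta> lam V 0 S = V"
  by (simp add: myopic_obj_def)

lemma myopic_obj_eq:
  assumes "s\<^sup>2 = lam * \<theta>"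
  shows "myopic_obj \<theta> lam V t S = V / (1 + V * t * S) + lam * t + s\<^sup>2 * t * S"
  using assms by (simp add: myopic_obj_def algebra_simps)

lemma myopic_obj_square_form:
  assumes "s\<^sup>2 = lam * \<theta>" and "V > 0" and "S \<ge> 0"
  shows "myopic_obj \<theta> lam V t S
           = (V - s * (1 + V * t * S))\<^sup>2 / ((1 + V * t * S) * V) + lam * t + 2 * s - s\<^sup>2 / V"
proof -
  define u where "u = 1 + V * t * S"
  have "u > 0"
    using assms by (simp add: u_def add_pos_nonneg)
  then have "V / u + s\<^sup>2 * (u - 1) / V = (V - s * u)\<^sup>2 / (u * V) + 2 * s - s\<^sup>2 / V"
    using \<open>V > 0\<close> by (simp add: field_simps power2_eq_square)
  moreover have "myopic_obj \<theta> lam V t S = V / u + lam * t + s\<^sup>2 * (u - 1) / V"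
    using myopic_obj_eq[OF assms(1)] \<open>V > 0\<close> by (simp add: u_def)
  ultimately show ?thesis
    unfolding u_def[symmetric] by linarith
qed

lemma myopic_obj_active_ge:
  assumes "s\<^sup>2 = lam * \<theta>" and "lam \<ge> 0" and "V > 0" and "t \<ge> 1" and "S \<ge> 0"
  shows "lam + 2 * s - s\<^sup>2 / V \<le> myopic_obj \<theta> lam V t S"
proof -
  have "0 \<le> (V - s * (1 + V * t * S))\<^sup>2 / ((1 + V * t * S) * V)"
    using assms by simp
  moreover have "lam \<le> lam * t"
    using assms by (simp add: mult_le_cancel_left1)
  ultimately show ?thesis
    unfolding myopic_obj_square_form[OF assms(1,3,5)] by linarith
qed

lemma myopic_obj_active_eq_iff:
  assumes "s\<^sup>2 = lam * \<theta>" and "s > 0" and "lam > 0" and "V > 0" and "t \<ge> 1" and "S \<ge> 0"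
  shows "myopic_obj \<theta> lam V t S = lam + 2 * s - s\<^sup>2 / V \<longleftrightarrow> t = 1 \<and> S = 1 / s - 1 / V"
proof -
  define u where "u = 1 + V * t * S"
  have u: "u > 0"
    using assms by (simp add: u_def add_pos_nonneg)
  have sq: "0 \<le> (V - s * u)\<^sup>2 / (u * V)" and lin: "0 \<le> lam * (real t - 1)"
    using assms u by simp_all
  have "myopic_obj \<theta> lam V t S = lam + 2 * s - s\<^sup>2 / V
          \<longleftrightarrow> (V - s * u)\<^sup>2 / (u * V) + lam * (real t - 1) = 0"
    using myopic_obj_square_form[OF assms(1,4,6), of t] by (simp add: u_def algebra_simps)
  also have "\<dots> \<longleftrightarrow> V = s * u \<and> t = 1"
    using sq lin u assms by (auto simp: add_nonneg_eq_0_iff)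
  also have "\<dots> \<longleftrightarrow> t = 1 \<and> S = 1 / s - 1 / V"
    using assms by (auto simp: u_def field_simps)
  finally show ?thesis .
qed

text \<open>For \<open>V \<le> s\<close> the sensing cost \<open>s\<^sup>2 t S\<close> already exceeds the first-order variance
  reduction \<open>V\<^sup>2 t S\<close>, so every active policy is worse than staying idle.\<close>
lemma myopic_obj_active_gt_idle:
  assumes "s\<^sup>2 = lam * \<theta>" and "lam > 0" and "V > 0" and "V \<le> s" and "t \<ge> 1" and "S \<ge> 0"
  shows "V < myopic_obj \<theta> lam V t S"
proof -
  define x where "x = t * S"
  have x: "x \<ge> 0"
    using assms by (simp add: x_def)
  have "0 < 1 + V * x"
    using assms x by (simp add: add_pos_nonneg)
  then have "V / (1 + V * x) = V - V\<^sup>2 * x + V ^ 3 * x\<^sup>2 / (1 + V * x)"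
    by (simp add: field_simps power2_eq_square power3_eq_cube)
  moreover have "0 \<le> V ^ 3 * x\<^sup>2 / (1 + V * x)"
    using assms x by simp
  moreover have "V\<^sup>2 \<le> s\<^sup>2"
    using \<open>V > 0\<close> \<open>V \<le> s\<close> by (simp add: power_mono)
  then have "V\<^sup>2 * x \<le> s\<^sup>2 * x"
    using x by (rule mult_right_mono)
  moreover have "0 < lam * t"
    using assms by simp
  ultimately show ?thesis
    unfolding myopic_obj_eq[OF assms(1)] x_def by (simp add: mult.assoc)
qed

lemma myopic_obj_active_opt:
  assumes "s\<^sup>2 = lam * \<theta>" and "s > 0" and "lam > 0" and "s \<le> V"
  shows "1 / s - 1 / V \<ge> 0" and "myopic_obj \<theta> lam V 1 (1 / s - 1 / V) = lam + 2 * s - s\<^sup>2 / V"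
proof -
  show "1 / s - 1 / V \<ge> 0"
    using assms by (simp add: frac_le)
  then show "myopic_obj \<theta> lam V 1 (1 / s - 1 / V) = lam + 2 * s - s\<^sup>2 / V"
    using myopic_obj_active_eq_iff[OF assms(1-3)] assms by simp
qed

lemma myopic_minimizers_idle:
  assumes "\<And>t S. t \<ge> 1 \<Longrightarrow> S \<ge> 0 \<Longrightarrow> V < myopic_obj \<theta> lam V t S"
  shows "myopic_minimizers B \<theta> lam V = {(0, S) | S. S \<ge> 0}"
proof -
  have "(t, S) \<in> myopic_minimizers B \<theta> lam V \<longleftrightarrow> t = 0 \<and> S \<ge> 0" for t S
  proof
    assume "(t, S) \<in> myopic_minimizers B \<theta> lam V"
    then have "S \<ge> 0" and "myopic_obj \<theta> lam V t S \<le> V"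
      unfolding myopic_minimizers_def by (auto dest!: spec[where x = 0])
    then show "t = 0 \<and> S \<ge> 0"
      using assms[of t S] by (cases t) auto
  next
    assume "t = 0 \<and> S \<ge> 0"
    moreover have "V \<le> myopic_obj \<theta> lam V t' S'" if "S' \<ge> 0" for t' S'
      using assms[of t' S'] that by (cases t') auto
    ultimately show "(t, S) \<in> myopic_minimizers B \<theta> lam V"
      unfolding myopic_minimizers_def by auto
  qed
  then show ?thesis
    by auto
qed

lemma myopic_minimizers_active:
  assumes "s\<^sup>2 = lam * \<theta>" and "s > 0" and "lam > 0" and "s \<le> V" and "B \<ge> 1"
    and "lam + 2 * s - s\<^sup>2 / V < V"
  shows "myopic_minimizers B \<theta> lam V = {(1, 1 / s - 1 / V)}"
proof -
  let ?c = "lam + 2 * s - s\<^sup>2 / V"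
  have V: "V > 0"
    using assms by linarith
  note opt = myopic_obj_active_opt[OF assms(1-4)]
  have "(t, S) \<in> myopic_minimizers B \<theta> lam V \<longleftrightarrow> t = 1 \<and> S = 1 / s - 1 / V" for t S
  proof
    assume "(t, S) \<in> myopic_minimizers B \<theta> lam V"
    then have S: "S \<ge> 0" and le: "myopic_obj \<theta> lam V t S \<le> ?c"
      using opt \<open>B \<ge> 1\<close> unfolding myopic_minimizers_def by fastforce+
    then have "t \<ge> 1"
      using assms(6) by (cases t) auto
    then show "t = 1 \<and> S = 1 / s - 1 / V"
      using le myopic_obj_active_ge[OF assms(1) _ V \<open>t \<ge> 1\<close> S]
        myopic_obj_active_eq_iff[OF assms(1-3) V \<open>t \<ge> 1\<close> S] assms(3) by simp
  next
    assume "t = 1 \<and> S = 1 / s - 1 / V"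
    moreover have "?c \<le> myopic_obj \<theta> lam V t' S'" if "S' \<ge> 0" for t' S'
      using myopic_obj_active_ge[OF assms(1) _ V _ that, of t'] assms(3,6) by (cases t') auto
    ultimately show "(t, S) \<in> myopic_minimizers B \<theta> lam V"
      using opt \<open>B \<ge> 1\<close> unfolding myopic_minimizers_def by auto
  qed
  then show ?thesis
    by auto
qed

lemma myopic_minimizers_tie:
  assumes "s\<^sup>2 = lam * \<theta>" and "s > 0" and "lam > 0" and "s \<le> V" and "B \<ge> 1"
    and "lam + 2 * s - s\<^sup>2 / V = V"
  shows "myopic_minimizers B \<theta> lam V = insert (1, 1 / s - 1 / V) {(0, S) | S. S \<ge> 0}"
proof -
  have V: "V > 0"
    using assms by linarith
  note opt = myopic_obj_active_opt[OF assms(1-4)]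
  have V_le: "V \<le> myopic_obj \<theta> lam V t S" if "S \<ge> 0" for t S
    using myopic_obj_active_ge[OF assms(1) _ V _ that, of t] assms(3,6) by (cases t) auto
  have "(t, S) \<in> myopic_minimizers B \<theta> lam V
          \<longleftrightarrow> (t = 1 \<and> S = 1 / s - 1 / V) \<or> (t = 0 \<and> S \<ge> 0)" for t S
  proof
    assume "(t, S) \<in> myopic_minimizers B \<theta> lam V"
    then have S: "S \<ge> 0" and le: "myopic_obj \<theta> lam V t S \<le> V"
      unfolding myopic_minimizers_def by (auto dest!: spec[where x = 0])
    show "(t = 1 \<and> S = 1 / s - 1 / V) \<or> (t = 0 \<and> S \<ge> 0)"
    proof (cases "t = 0")
      case False
      then have "t \<ge> 1"
        by simp
      then show ?thesis
        using le V_le[OF S, of t] myopic_obj_active_eq_iff[OF assms(1-3) V \<open>t \<ge> 1\<close> S] assms(6)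
        by simp
    qed (use S in simp)
  next
    assume "(t = 1 \<and> S = 1 / s - 1 / V) \<or> (t = 0 \<and> S \<ge> 0)"
    then show "(t, S) \<in> myopic_minimizers B \<theta> lam V"
      using opt V_le \<open>B \<ge> 1\<close> assms(6) unfolding myopic_minimizers_def by auto
  qed
  then show ?thesis
    by auto
qed

lemma idle_minus_active_value:
  fixes \<theta> lam V :: real
  assumes "\<theta> > 0" and "lam > 0" and "V > 0"
  defines "s \<equiv> sqrt (lam * \<theta>)"
  defines "w \<equiv> s + lam / 2 - sqrt lam * sqrt (s + lam / 4)"
  shows "V - (lam + 2 * s - s\<^sup>2 / V) = (V - v_th \<theta> lam) * (V - w) / V"
    and "w < s" and "s < v_th \<theta> lam"
proof -
  define r where "r = sqrt lam * sqrt (s + lam / 4)"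
  have s: "s > 0"
    using assms(1,2) by (simp add: s_def)
  have r: "r\<^sup>2 = lam * s + lam\<^sup>2 / 4"
    using s assms(2) by (simp add: r_def power_mult_distrib algebra_simps power2_eq_square)
  have "(lam / 2)\<^sup>2 < r\<^sup>2"
    using r s assms(2) by (simp add: power_divide)
  moreover have "r \<ge> 0"
    using s assms(2) by (simp add: r_def)
  ultimately have "lam / 2 < r"
    by (rule power2_less_imp_less)
  moreover have v: "v_th \<theta> lam = s + lam / 2 + r" and w: "w = s + lam / 2 - r"
    by (simp_all add: v_th_def s_def r_def w_def)
  ultimately show "w < s" and "s < v_th \<theta> lam"
    using assms(2) by simp_all
  have "(V - v_th \<theta> lam) * (V - w) = (V - s - lam / 2)\<^sup>2 - r\<^sup>2"
    unfolding v w by (simp add: power2_eq_square algebra_simps)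
  also have "\<dots> = V\<^sup>2 - (2 * s + lam) * V + s\<^sup>2"
    unfolding r by (simp add: power2_eq_square algebra_simps)
  finally show "V - (lam + 2 * s - s\<^sup>2 / V) = (V - v_th \<theta> lam) * (V - w) / V"
    using assms(3) by (simp add: field_simps power2_eq_square)
qed

lemma active_value_vs_idle:
  fixes \<theta> lam V :: real
  assumes "\<theta> > 0" and "lam > 0" and "V > 0"
  defines "s \<equiv> sqrt (lam * \<theta>)"
  shows "v_th \<theta> lam < V \<Longrightarrow> lam + 2 * s - s\<^sup>2 / V < V"
    and "V = v_th \<theta> lam \<Longrightarrow> lam + 2 * s - s\<^sup>2 / V = V"
    and "s < V \<Longrightarrow> V < v_th \<theta> lam \<Longrightarrow> V < lam + 2 * s - s\<^sup>2 / V"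
proof -
  define w where "w = s + lam / 2 - sqrt lam * sqrt (s + lam / 4)"
  note gap = idle_minus_active_value[OF assms(1-3), folded s_def w_def]
  show "v_th \<theta> lam < V \<Longrightarrow> lam + 2 * s - s\<^sup>2 / V < V"
    using gap assms(3) by (smt (verit) divide_pos_pos mult_pos_pos)
  show "V = v_th \<theta> lam \<Longrightarrow> lam + 2 * s - s\<^sup>2 / V = V"
    using gap by simp
  show "s < V \<Longrightarrow> V < v_th \<theta> lam \<Longrightarrow> V < lam + 2 * s - s\<^sup>2 / V"
    using gap assms(3) by (smt (verit) divide_neg_pos mult_neg_pos)
qed

lemma myopic_obj_active_gt_idle_below_v_th:
  assumes "\<theta> > 0" and "lam > 0" and "V > 0" and "V < v_th \<theta> lam" and "t \<ge> 1" and "S \<ge> 0"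
  shows "V < myopic_obj \<theta> lam V t S"
proof -
  define s where "s = sqrt (lam * \<theta>)"
  have s: "s\<^sup>2 = lam * \<theta>"
    using assms(1,2) by (simp add: s_def)
  show ?thesis
  proof (cases "V \<le> s")
    case True
    then show ?thesis
      using myopic_obj_active_gt_idle[OF s assms(2,3) _ assms(5,6)] by simp
  next
    case False
    then have "V < lam + 2 * s - s\<^sup>2 / V"
      using active_value_vs_idle(3)[OF assms(1-3), folded s_def] assms(4) by simp
    then show ?thesis
      using myopic_obj_active_ge[OF s _ assms(3,5,6)] assms(2) by simp
  qed
qed

theorem corollary1:
  fixes c_TX \<phi> lam V :: real and B :: nat
  assumes "c_TX > 0" and "\<phi> > 0" and "B \<ge> 1"
    and "lam > 0" and "lam \<le> 1 / (1 + sqrt (\<phi> / c_TX))^2"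
    and "0 < V" and "V \<le> 1"
  shows "(V > v_th (\<phi> / c_TX) lam \<longrightarrow>
           myopic_minimizers B (\<phi> / c_TX) lam V
             = {(1, 1 / sqrt (lam * (\<phi> / c_TX)) - 1 / V)})
       \<and> (V < v_th (\<phi> / c_TX) lam \<longrightarrow>
           myopic_minimizers B (\<phi> / c_TX) lam V = {(0, S) | S. S \<ge> 0})
       \<and> (V = v_th (\<phi> / c_TX) lam \<longrightarrow>
           myopic_minimizers B (\<phi> / c_TX) lam V
             = insert (1, 1 / sqrt (lam * (\<phi> / c_TX)) - 1 / V) {(0, S) | S. S \<ge> 0})"
proof -
  define \<theta> where "\<theta> = \<phi> / c_TX"
  define s where "s = sqrt (lam * \<theta>)"
  have \<theta>: "\<theta> > 0"
    using assms(1,2) by (simp add: \<theta>_def)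
  have s: "s > 0" "s\<^sup>2 = lam * \<theta>"
    using \<theta> assms(4) by (simp_all add: s_def)
  have "s < v_th \<theta> lam"
    using idle_minus_active_value(3)[OF \<theta> assms(4,6)] by (simp add: s_def)
  note compare = active_value_vs_idle[OF \<theta> assms(4,6), folded s_def]
  have "v_th \<theta> lam < V \<Longrightarrow> myopic_minimizers B \<theta> lam V = {(1, 1 / s - 1 / V)}"
    using compare(1) \<open>s < v_th \<theta> lam\<close>
    by (intro myopic_minimizers_active[OF s(2,1) assms(4) _ assms(3)]) auto
  moreover have "V < v_th \<theta> lam \<Longrightarrow> myopic_minimizers B \<theta> lam V = {(0, S) | S. S \<ge> 0}"
    using myopic_obj_active_gt_idle_below_v_th[OF \<theta> assms(4,6)] by (intro myopic_minimizers_idle)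
  moreover have "V = v_th \<theta> lam
      \<Longrightarrow> myopic_minimizers B \<theta> lam V = insert (1, 1 / s - 1 / V) {(0, S) | S. S \<ge> 0}"
    using compare(2) \<open>s < v_th \<theta> lam\<close>
    by (intro myopic_minimizers_tie[OF s(2,1) assms(4) _ assms(3)]) auto
  ultimately show ?thesis
    unfolding \<theta>_def s_def by blast
qed

end
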